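(* Let $x,y:\mathbb{Z}\to\mathbb{R}$ be the coordinates of the vertices of a polygon indexed by $u\in\mathbb{Z}$, let $X+ih_1$, $Y+ih_2$ be their discrete analytic extensions, $h=(h_1,h_2)$, and let $F:\mathbb{Z}^2\to\mathbb{R}$ satisfy $F(u+1,v)-F(u,v)=-[h(u+\tfrac12,v-\tfrac12),h(u+\tfrac12,v+\tfrac12)]$ and $F(u,v+1)-F(u,v)=[h(u-\tfrac12,v+\tfrac12),h(u+\tfrac12,v+\tfrac12)]$. Let $Q=(X,Y,F):\mathbb{Z}^2\to\mathbb{R}^3$. Then $Q$ is a discrete definite improper affine sphere: for every $(u,v)\in\mathbb{Z}^2$ the four points $Q(u,v),Q(u+1,v),Q(u,v+1),Q(u+1,v+1)$ are coplanar, and the discrete Laplacian $Q(u+1,v)+Q(u,v+1)+Q(u-1,v)+Q(u,v-1)-4Q(u,v)$ is parallel to the $z$-axis.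
   Context: $[X,Y]$ is the $2\times2$ determinant with columns $X,Y$. With $(\mathbb{Z}^2)^*=(\mathbb{Z}+\tfrac12)^2$, functions $g:\mathbb{Z}^2\to\mathbb{R}$, $k:(\mathbb{Z}^2)^*\to\mathbb{R}$ form a discrete analytic function $g+ik$ if $g(u+1,v)-g(u,v)=k(u+\tfrac12,v+\tfrac12)-k(u+\tfrac12,v-\tfrac12)$ and $g(u,v+1)-g(u,v)=-(k(u+\tfrac12,v+\tfrac12)-k(u-\tfrac12,v+\tfrac12))$ for all $(u,v)$. The discrete analytic extension of $x$ is the unique $X+ih_1$ with $X(u,0)=x(u)$ and $h_1(u+\tfrac12,\tfrac12)=-h_1(u+\tfrac12,-\tfrac12)$; likewise $Y+ih_2$ for $y$. A map $Q:\mathbb{Z}^2\to\mathbb{R}^3$ is a discrete definite improper affine sphere if all elementary quadrilaterals $Q(u,v),Q(u+1,v),Q(u,v+1),Q(u+1,v+1)$ are planar and there is a fixed direction $\xi$ to which every discrete Laplacian of $Q$ is parallel. *)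

theory Defs
  imports "HOL-Analysis.Analysis"
begin

text \<open>Convention: a function on the dual lattice (Z^2)^* = (Z+1/2)^2 is encoded as
  k :: int => int => real with  k i j  standing for  k(i+1/2, j+1/2).\<close>

definition det2 :: "real \<times> real \<Rightarrow> real \<times> real \<Rightarrow> real" where
  "det2 A B = fst A * snd B - snd A * fst B"

definition discrete_analytic :: "(int \<Rightarrow> int \<Rightarrow> real) \<Rightarrow> (int \<Rightarrow> int \<Rightarrow> real) \<Rightarrow> bool" where
  "discrete_analytic g k \<longleftrightarrow>
     (\<forall>u v. g (u+1) v - g u v = k u v - k u (v-1)) \<and>
     (\<forall>u v. g u (v+1) - g u v = - (k u v - k (u-1) v))"

definition discrete_analytic_extension ::
    "(int \<Rightarrow> real) \<Rightarrow> (int \<Rightarrow> int \<Rightarrow> real) \<Rightarrow> (int \<Rightarrow> int \<Rightarrow> real) \<Rightarrow> bool" where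
  "discrete_analytic_extension x g k \<longleftrightarrow>
     discrete_analytic g k \<and> (\<forall>u. g u 0 = x u) \<and> (\<forall>u. k u 0 = - k u (-1))"

definition discrete_laplacian :: "(int \<Rightarrow> int \<Rightarrow> real^3) \<Rightarrow> int \<Rightarrow> int \<Rightarrow> real^3" where
  "discrete_laplacian Q u v =
     Q (u+1) v + Q u (v+1) + Q (u-1) v + Q u (v-1) - 4 *\<^sub>R Q u v"

definition discrete_definite_improper_affine_sphere ::
    "(int \<Rightarrow> int \<Rightarrow> real^3) \<Rightarrow> real^3 \<Rightarrow> bool" where
  "discrete_definite_improper_affine_sphere Q \<xi> \<longleftrightarrow>
     \<xi> \<noteq> 0 \<and>
     (\<forall>u v. coplanar {Q u v, Q (u+1) v, Q u (v+1), Q (u+1) (v+1)}) \<and>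
     (\<forall>u v. \<exists>c. discrete_laplacian Q u v = c *\<^sub>R \<xi>)"

end

theory Submission
  imports Defs
begin

text \<open>The real parts X, Y of discrete analytic functions are discrete harmonic, so the
  Laplacian of Q = (X, Y, F) has vanishing first two components. For coplanarity, the
  defining equations of F say that along each of the four edges around the dual vertex
  h(u+1/2, v+1/2) = (a, b) the increments satisfy dF = b dX - a dY, so the face lies in the
  plane z = F(u,v) + b (x - X(u,v)) - a (y - Y(u,v)).\<close>

lemma coplanar_if_graph_of_affine:
  fixes S :: "(real^3) set"
  assumes "\<And>q. q \<in> S \<Longrightarrow> q $ 3 = c + a * q $ 1 + b * q $ 2"
  shows "coplanar S"
proof -
  let ?P = "vector [0, 0, c] :: real^3"
  have "q \<in> affine hull {?P, ?P + vector [1, 0, a], ?P + vector [0, 1, b]}" if "q \<in> S" for q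
  proof -
    have "q = (1 - q $ 1 - q $ 2) *\<^sub>R ?P + (q $ 1) *\<^sub>R (?P + vector [1, 0, a])
              + (q $ 2) *\<^sub>R (?P + vector [0, 1, b])"
      using assms[OF that] by (simp add: vec_eq_iff forall_3 vector_3 algebra_simps)
    then show ?thesis
      unfolding affine_hull_3 by force
  qed
  then show ?thesis
    unfolding coplanar_def by blast
qed

lemma discrete_analytic_harmonic:
  assumes "discrete_analytic g k"
  shows "g (u+1) v + g u (v+1) + g (u-1) v + g u (v-1) - 4 * g u v = 0"
proof -
  from assms have A: "\<And>u v. g (u+1) v - g u v = k u v - k u (v-1)"
    and B: "\<And>u v. g u (v+1) - g u v = - (k u v - k (u-1) v)"
    unfolding discrete_analytic_def by auto
  show ?thesis
    using A[of u v] A[of "u-1" v] B[of u v] B[of u "v-1"] by simp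
qed

lemma affine_sphere_face_in_tangent_plane:
  assumes X: "discrete_analytic X h1" and Y: "discrete_analytic Y h2"
    and F1: "\<And>u v. F (u+1) v - F u v = - det2 (h1 u (v-1), h2 u (v-1)) (h1 u v, h2 u v)"
    and F2: "\<And>u v. F u (v+1) - F u v = det2 (h1 (u-1) v, h2 (u-1) v) (h1 u v, h2 u v)"
    and vertex: "u' \<in> {u, u+1}" "v' \<in> {v, v+1}"
  shows "F u' v' - h2 u v * X u' v' + h1 u v * Y u' v' = F u v - h2 u v * X u v + h1 u v * Y u v"
proof -
  from X Y have XA: "\<And>u v. X (u+1) v - X u v = h1 u v - h1 u (v-1)"
    and XB: "\<And>u v. X u (v+1) - X u v = - (h1 u v - h1 (u-1) v)"
    and YA: "\<And>u v. Y (u+1) v - Y u v = h2 u v - h2 u (v-1)"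
    and YB: "\<And>u v. Y u (v+1) - Y u v = - (h2 u v - h2 (u-1) v)"
    unfolding discrete_analytic_def by auto
  let ?L = "\<lambda>u' v'. F u' v' - h2 u v * X u' v' + h1 u v * Y u' v'"
  have bottom: "?L (u+1) v = ?L u v"
  proof -
    have eqs: "X (u+1) v = X u v + (h1 u v - h1 u (v-1))" "Y (u+1) v = Y u v + (h2 u v - h2 u (v-1))"
      "F (u+1) v = F u v - det2 (h1 u (v-1), h2 u (v-1)) (h1 u v, h2 u v)"
      using XA[of u v] YA[of u v] F1[of u v] by linarith+
    show ?thesis unfolding eqs det2_def by (simp add: algebra_simps)
  qed
  have left: "?L u (v+1) = ?L u v"
  proof -
    have eqs: "X u (v+1) = X u v - (h1 u v - h1 (u-1) v)" "Y u (v+1) = Y u v - (h2 u v - h2 (u-1) v)"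
      "F u (v+1) = F u v + det2 (h1 (u-1) v, h2 (u-1) v) (h1 u v, h2 u v)"
      using XB[of u v] YB[of u v] F2[of u v] by linarith+
    show ?thesis unfolding eqs det2_def by (simp add: algebra_simps)
  qed
  have right: "?L (u+1) (v+1) = ?L (u+1) v"
  proof -
    have eqs: "X (u+1) (v+1) = X (u+1) v - (h1 (u+1) v - h1 u v)"
      "Y (u+1) (v+1) = Y (u+1) v - (h2 (u+1) v - h2 u v)"
      "F (u+1) (v+1) = F (u+1) v + det2 (h1 u v, h2 u v) (h1 (u+1) v, h2 (u+1) v)"
      using XB[of "u+1" v] YB[of "u+1" v] F2[of "u+1" v] by simp_all
    show ?thesis unfolding eqs det2_def by (simp add: algebra_simps)
  qed
  from vertex bottom left right show ?thesis
    by auto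
qed

theorem mainTheorem11:
  fixes x y :: "int \<Rightarrow> real"
    and X Y h1 h2 F :: "int \<Rightarrow> int \<Rightarrow> real"
  assumes extX: "discrete_analytic_extension x X h1"
    and extY: "discrete_analytic_extension y Y h2"
    and F1: "\<And>u v. F (u+1) v - F u v = - det2 (h1 u (v-1), h2 u (v-1)) (h1 u v, h2 u v)"
    and F2: "\<And>u v. F u (v+1) - F u v = det2 (h1 (u-1) v, h2 (u-1) v) (h1 u v, h2 u v)"
  shows "discrete_definite_improper_affine_sphere
           (\<lambda>u v. vector [X u v, Y u v, F u v]) (vector [0, 0, 1])"
proof -
  let ?Q = "\<lambda>u v. vector [X u v, Y u v, F u v] :: real^3"
  have X: "discrete_analytic X h1" and Y: "discrete_analytic Y h2"
    using extX extY unfolding discrete_analytic_extension_def by auto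
  have "(vector [0, 0, 1] :: real^3) \<noteq> 0"
    by (simp add: vec_eq_iff forall_3 vector_3)
  moreover have "coplanar {?Q u v, ?Q (u+1) v, ?Q u (v+1), ?Q (u+1) (v+1)}" for u v
  proof (rule coplanar_if_graph_of_affine[where a = "h2 u v" and b = "- h1 u v"
        and c = "F u v - h2 u v * X u v + h1 u v * Y u v"])
    fix q
    assume "q \<in> {?Q u v, ?Q (u+1) v, ?Q u (v+1), ?Q (u+1) (v+1)}"
    then obtain u' v' where "u' \<in> {u, u+1}" "v' \<in> {v, v+1}" "q = ?Q u' v'"
      by blast
    then show "q $ 3 = F u v - h2 u v * X u v + h1 u v * Y u v + h2 u v * q $ 1 + - h1 u v * q $ 2"
      using affine_sphere_face_in_tangent_plane[OF X Y F1 F2, of u' u v' v]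
      by (simp add: vector_3)
  qed
  moreover have "discrete_laplacian ?Q u v
      = (F (u+1) v + F u (v+1) + F (u-1) v + F u (v-1) - 4 * F u v) *\<^sub>R vector [0, 0, 1]" for u v
    using discrete_analytic_harmonic[OF X, of u v] discrete_analytic_harmonic[OF Y, of u v]
    by (simp add: discrete_laplacian_def vec_eq_iff forall_3 vector_3)
  ultimately show ?thesis
    unfolding discrete_definite_improper_affine_sphere_def by blast
qed

end
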